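(* Let $\mathcal{A}$ be a commutative $\sigma$-finite W*-algebra or a commutative AW*-algebra, and let $\mathcal{E}$ be a Hilbert C*-module over $\mathcal{A}$ of rank $d$. Let $n\geq d$ and let $\{\tau_j\}_{j=1}^n$ be a collection of vectors in $\mathcal{E}$ with $\langle \tau_j,\tau_j\rangle=1$ for all $1\leq j\leq n$. Then, for every $m\in\mathbb{N}$, \[ \sum_{j=1}^n\sum_{k=1}^n\|\langle \tau_j, \tau_k\rangle \|^{2m}\geq \sum_{j=1}^n\sum_{k=1}^n\langle \tau_j, \tau_k\rangle ^{m}\langle \tau_k, \tau_j\rangle ^{m}\geq \frac{n^2}{{d+m-1\choose m}}, \] in particular \[ \sum_{j=1}^n\sum_{k=1}^n\|\langle \tau_j, \tau_k\rangle \|^{2} \geq \sum_{j=1}^n\sum_{k=1}^n\langle \tau_j, \tau_k\rangle \langle \tau_k, \tau_j\rangle \geq \frac{n^2}{d}. \] Further (for $n\geq 2$), for every $m\in\mathbb{N}$, \[ \max _{1\leq j,k \leq n,\, j\neq k}\|\langle \tau_j, \tau_k\rangle \|^{2m}\geq \frac{1}{n-1}\left[\frac{n}{{d+m-1\choose m}}-1\right], \] and in particular \[ \max _{1\leq j,k \leq n,\, j\neq k}\|\langle \tau_j, \tau_k\rangle \|^{2}\geq\frac{n-d}{d(n-1)}. \]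
   Context: A W*-algebra is $\sigma$-finite if it contains at most countably many mutually orthogonal (nonzero) projections. A C*-algebra is an AW*-algebra if every set of orthogonal projections has a supremum and every maximal commutative self-adjoint subalgebra is generated by its projections. Such algebras are unital, with identity $1$. The $\mathcal{A}$-valued inner product on $\mathcal{E}$ is linear in the first variable and conjugate-linear in the second; $\mathcal{A}$ acts from the left. $\mathcal{E}$ has rank $d$ if it has an orthonormal basis $\{\omega_j\}_{j=1}^d$, i.e. $\langle\omega_j,\omega_k\rangle=\delta_{jk}1$ and $x=\sum_{j=1}^d\langle x,\omega_j\rangle\omega_j$ for all $x\in\mathcal{E}$. Inequalities between elements of $\mathcal{A}$ refer to the order on self-adjoint elements, a real number $c$ being identified with $c\cdot1$; $\|\cdot\|$ is the C*-norm of $\mathcal{A}$. *)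

theory Defs
  imports "HOL-Analysis.Analysis"
begin

text \<open>
  A commutative unital C*-algebra is modelled on the whole of a type
  'a of class comm_ring_1, real_normed_algebra_1, banach, together with an
  element cj playing the role of the imaginary unit (i times 1, which yields the
  complex scalar multiplication) and an involution st (the star operation).
\<close>


definition csc :: "'a::{comm_ring_1,real_normed_algebra_1,banach} \<Rightarrow> complex \<Rightarrow> 'a \<Rightarrow> 'a" where
  "csc cj c x = (of_real (Re c) + of_real (Im c) * cj) * x"

definition cstar_comm :: "'a::{comm_ring_1,real_normed_algebra_1,banach} \<Rightarrow> ('a \<Rightarrow> 'a) \<Rightarrow> bool" where
  "cstar_comm cj st \<longleftrightarrow>
     cj * cj = -1 \<and>
     (\<forall>c x. norm (csc cj c x) = cmod c * norm x) \<and>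
     (\<forall>x y. st (x + y) = st x + st y) \<and>
     (\<forall>c x. st (csc cj c x) = csc cj (cnj c) (st x)) \<and>
     (\<forall>x y. st (x * y) = st y * st x) \<and>
     (\<forall>x. st (st x) = x) \<and>
     (\<forall>x. norm (st x * x) = (norm x)\<^sup>2)"

definition alg_spectrum :: "'a::{comm_ring_1,real_normed_algebra_1,banach} \<Rightarrow> 'a \<Rightarrow> complex set" where
  "alg_spectrum cj x = {c. \<not> (\<exists>y. (x - csc cj c 1) * y = 1 \<and> y * (x - csc cj c 1) = 1)}"

definition alg_pos :: "'a::{comm_ring_1,real_normed_algebra_1,banach} \<Rightarrow> ('a \<Rightarrow> 'a) \<Rightarrow> 'a \<Rightarrow> bool" where
  "alg_pos cj st x \<longleftrightarrow> st x = x \<and> (\<forall>c\<in>alg_spectrum cj x. Im c = 0 \<and> Re c \<ge> 0)"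

definition alg_le :: "'a::{comm_ring_1,real_normed_algebra_1,banach} \<Rightarrow> ('a \<Rightarrow> 'a) \<Rightarrow> 'a \<Rightarrow> 'a \<Rightarrow> bool" where
  "alg_le cj st x y \<longleftrightarrow> st x = x \<and> st y = y \<and> alg_pos cj st (y - x)"

definition is_proj :: "('a::{comm_ring_1,real_normed_algebra_1,banach} \<Rightarrow> 'a) \<Rightarrow> 'a \<Rightarrow> bool" where
  "is_proj st p \<longleftrightarrow> st p = p \<and> p * p = p"

definition orth_projs :: "('a::{comm_ring_1,real_normed_algebra_1,banach} \<Rightarrow> 'a) \<Rightarrow> 'a set \<Rightarrow> bool" where
  "orth_projs st P \<longleftrightarrow> (\<forall>p\<in>P. is_proj st p) \<and> (\<forall>p\<in>P. \<forall>q\<in>P. p \<noteq> q \<longrightarrow> p * q = 0)"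

definition star_subalg :: "'a::{comm_ring_1,real_normed_algebra_1,banach} \<Rightarrow> ('a \<Rightarrow> 'a) \<Rightarrow> 'a set \<Rightarrow> bool" where
  "star_subalg cj st S \<longleftrightarrow> 0 \<in> S \<and> (\<forall>x\<in>S. \<forall>y\<in>S. x + y \<in> S \<and> x * y \<in> S) \<and>
     (\<forall>c. \<forall>x\<in>S. csc cj c x \<in> S) \<and> (\<forall>x\<in>S. st x \<in> S)"

definition max_comm_sa_subalg :: "'a::{comm_ring_1,real_normed_algebra_1,banach} \<Rightarrow> ('a \<Rightarrow> 'a) \<Rightarrow> 'a set \<Rightarrow> bool" where
  "max_comm_sa_subalg cj st S \<longleftrightarrow> star_subalg cj st S \<and> (\<forall>x\<in>S. \<forall>y\<in>S. x * y = y * x) \<and>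
     (\<forall>T. star_subalg cj st T \<and> (\<forall>x\<in>T. \<forall>y\<in>T. x * y = y * x) \<and> S \<subseteq> T \<longrightarrow> T = S)"

definition cstar_gen :: "'a::{comm_ring_1,real_normed_algebra_1,banach} \<Rightarrow> ('a \<Rightarrow> 'a) \<Rightarrow> 'a set \<Rightarrow> 'a set" where
  "cstar_gen cj st G = \<Inter>{T. G \<subseteq> T \<and> closed T \<and> star_subalg cj st T}"

definition AW_star :: "'a::{comm_ring_1,real_normed_algebra_1,banach} \<Rightarrow> ('a \<Rightarrow> 'a) \<Rightarrow> bool" where
  "AW_star cj st \<longleftrightarrow> cstar_comm cj st \<and>
     (\<forall>P. orth_projs st P \<longrightarrow>
        (\<exists>s. is_proj st s \<and> (\<forall>p\<in>P. alg_le cj st p s) \<and>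
             (\<forall>t. is_proj st t \<and> (\<forall>p\<in>P. alg_le cj st p t) \<longrightarrow> alg_le cj st s t))) \<and>
     (\<forall>S. max_comm_sa_subalg cj st S \<longrightarrow> S = cstar_gen cj st {p\<in>S. is_proj st p})"

text \<open>W*-algebras: C*-algebras that are (isometrically) the dual of a Banach space.
  The predual is realised as a subspace V of the bounded complex-linear functionals.\<close>

definition cfunctional :: "'a::{comm_ring_1,real_normed_algebra_1,banach} \<Rightarrow> ('a \<Rightarrow> complex) \<Rightarrow> bool" where
  "cfunctional cj f \<longleftrightarrow> (\<forall>x y. f (x + y) = f x + f y) \<and> (\<forall>c x. f (csc cj c x) = c * f x) \<and>
     (\<exists>K. \<forall>x. cmod (f x) \<le> K * norm x)"

definition fnorm :: "('a::{comm_ring_1,real_normed_algebra_1,banach} \<Rightarrow> complex) \<Rightarrow> real" where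
  "fnorm f = Sup {cmod (f x) | x. norm x \<le> 1}"

definition W_star :: "'a::{comm_ring_1,real_normed_algebra_1,banach} \<Rightarrow> ('a \<Rightarrow> 'a) \<Rightarrow> bool" where
  "W_star cj st \<longleftrightarrow> cstar_comm cj st \<and>
     (\<exists>V. (\<forall>f\<in>V. cfunctional cj f) \<and> (\<lambda>_. 0) \<in> V \<and>
          (\<forall>f\<in>V. \<forall>g\<in>V. (\<lambda>x. f x + g x) \<in> V) \<and> (\<forall>c. \<forall>f\<in>V. (\<lambda>x. c * f x) \<in> V) \<and>
          (\<forall>x. norm x = Sup {cmod (f x) | f. f \<in> V \<and> fnorm f \<le> 1}) \<and>
          (\<forall>\<phi>. (\<forall>f\<in>V. \<forall>g\<in>V. \<phi> (\<lambda>x. f x + g x) = \<phi> f + \<phi> g) \<and>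
               (\<forall>c. \<forall>f\<in>V. \<phi> (\<lambda>x. c * f x) = c * \<phi> f) \<and>
               (\<exists>K. \<forall>f\<in>V. cmod (\<phi> f) \<le> K * fnorm f)
             \<longrightarrow> (\<exists>a. \<forall>f\<in>V. \<phi> f = f a)))"

definition sigma_finite_alg :: "('a::{comm_ring_1,real_normed_algebra_1,banach} \<Rightarrow> 'a) \<Rightarrow> bool" where
  "sigma_finite_alg st \<longleftrightarrow> (\<forall>P. orth_projs st P \<and> 0 \<notin> P \<longrightarrow> countable P)"

definition hilbert_module :: "'a::{comm_ring_1,real_normed_algebra_1,banach} \<Rightarrow> ('a \<Rightarrow> 'a)
    \<Rightarrow> ('a \<Rightarrow> 'e::ab_group_add \<Rightarrow> 'e) \<Rightarrow> ('e \<Rightarrow> 'e \<Rightarrow> 'a) \<Rightarrow> bool" where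
  "hilbert_module cj st act ip \<longleftrightarrow>
     (\<forall>a b x. act (a + b) x = act a x + act b x) \<and>
     (\<forall>a x y. act a (x + y) = act a x + act a y) \<and>
     (\<forall>a b x. act (a * b) x = act a (act b x)) \<and>
     (\<forall>x. act 1 x = x) \<and>
     (\<forall>x y z. ip (x + y) z = ip x z + ip y z) \<and>
     (\<forall>a x y. ip (act a x) y = a * ip x y) \<and>
     (\<forall>x y. ip y x = st (ip x y)) \<and>
     (\<forall>x. alg_pos cj st (ip x x)) \<and>
     (\<forall>x. ip x x = 0 \<longrightarrow> x = 0) \<and>
     (\<forall>X::nat \<Rightarrow> 'e.
        (\<forall>e>0. \<exists>N. \<forall>p\<ge>N. \<forall>q\<ge>N. sqrt (norm (ip (X p - X q) (X p - X q))) < e) \<longrightarrow>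
        (\<exists>L. (\<lambda>k. sqrt (norm (ip (X k - L) (X k - L)))) \<longlonglongrightarrow> 0))"

definition has_rank :: "('a::{comm_ring_1,real_normed_algebra_1,banach} \<Rightarrow> 'e::ab_group_add \<Rightarrow> 'e)
    \<Rightarrow> ('e \<Rightarrow> 'e \<Rightarrow> 'a) \<Rightarrow> nat \<Rightarrow> bool" where
  "has_rank act ip d \<longleftrightarrow> (\<exists>\<omega>::nat \<Rightarrow> 'e.
     (\<forall>j\<in>{1..d}. \<forall>k\<in>{1..d}. ip (\<omega> j) (\<omega> k) = (if j = k then 1 else 0)) \<and>
     (\<forall>x. x = (\<Sum>j=1..d. act (ip x (\<omega> j)) (\<omega> j))))"

end

theory Submission
  imports Defs "HOL-Library.Multiset"
begin

text \<open>
  Positivity is handled through its norm characterisation: a self-adjoint h is positive iff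
  \<parallel>s - h\<parallel> \<le> s for some s \<ge> 0. This makes the positive elements visibly a cone, and it
  contains every y y*.

  In an orthonormal basis, \<langle>\<tau>_j, \<tau>_k\<rangle> = \<Sum>_l a_jl a_kl*, and by the multinomial theorem the
  m-th powers \<langle>\<tau>_j, \<tau>_k\<rangle>^m again form the Gram matrix G of n vectors with unit diagonal,
  now in dimension D = C(d+m-1, m), the number of multisets of size m over {1..d}. Exchanging
  the order of summation, \<Sum>_jk G_jk G_kj = \<Sum>_il S_il S_il* \<ge> \<Sum>_i S_ii^2 \<ge> (\<Sum>_i S_ii)^2/D = n^2/D,
  where S is the Gram matrix of the transposed family and the last step is Cauchy-Schwarz.
  The upper bound is termwise \<parallel>x^m\<parallel>^2 \<le> \<parallel>x\<parallel>^(2m), and taking norms in the lower bound after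
  removing the diagonal gives the estimate for the largest off-diagonal entry.
\<close>

lemma one_minus_dvd_one:
  fixes x :: "'a::{comm_ring_1,real_normed_algebra_1,banach}"
  assumes "norm x < 1"
  shows "(1 - x) dvd 1"
proof -
  have s: "summable (\<lambda>n. x ^ n)"
    by (rule summable_comparison_test[of _ "\<lambda>n. norm x ^ n"])
       (auto intro!: exI[of _ 0] norm_power_ineq summable_geometric simp: assms)
  have "(\<lambda>n. (1 - x) * (\<Sum>i<n. x ^ i)) \<longlonglongrightarrow> (1 - x) * suminf (\<lambda>n. x ^ n)"
    using s by (intro tendsto_mult tendsto_const) (simp add: summable_LIMSEQ)
  moreover have "(\<lambda>n. (1 - x) * (\<Sum>i<n. x ^ i)) = (\<lambda>n. 1 - x ^ n)"
    by (simp add: one_diff_power_eq)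
  moreover have "(\<lambda>n. 1 - x ^ n) \<longlonglongrightarrow> 1 - 0"
    using s by (intro tendsto_diff tendsto_const summable_LIMSEQ_zero)
  ultimately have "1 = (1 - x) * suminf (\<lambda>n. x ^ n)"
    using LIMSEQ_unique by fastforce
  then show ?thesis by (rule dvdI)
qed

lemma sum_sum_power2_diff:
  fixes p :: "'i \<Rightarrow> 'a::comm_ring_1"
  assumes "finite I"
  shows "(\<Sum>i\<in>I. \<Sum>l\<in>I. (p i - p l)\<^sup>2)
    = of_nat (2 * card I) * (\<Sum>i\<in>I. (p i)\<^sup>2) - 2 * (\<Sum>i\<in>I. p i)\<^sup>2"
proof -
  have "(\<Sum>i\<in>I. \<Sum>l\<in>I. (p i - p l)\<^sup>2) = (\<Sum>i\<in>I. \<Sum>l\<in>I. (p i)\<^sup>2 + (p l)\<^sup>2 - 2 * (p i * p l))"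
    by (simp add: power2_diff algebra_simps)
  also have "\<dots> = of_nat (card I) * (\<Sum>i\<in>I. (p i)\<^sup>2) + of_nat (card I) * (\<Sum>l\<in>I. (p l)\<^sup>2)
      - 2 * (\<Sum>i\<in>I. \<Sum>l\<in>I. p i * p l)"
    by (simp add: sum.distrib sum_subtractf sum_distrib_left)
  also have "(\<Sum>i\<in>I. \<Sum>l\<in>I. p i * p l) = (\<Sum>i\<in>I. p i)\<^sup>2"
    by (simp add: power2_eq_square sum_product)
  finally show ?thesis by (simp add: algebra_simps)
qed

lemma power_sum_eq_sum_lists:
  fixes x :: "'i \<Rightarrow> 'a::comm_semiring_1"
  assumes "finite A"
  shows "(\<Sum>l\<in>A. x l) ^ m = (\<Sum>xs\<in>{xs. set xs \<subseteq> A \<and> length xs = m}. prod_list (map x xs))"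
proof (induction m)
  case 0
  have "{xs. set xs \<subseteq> A \<and> length xs = 0} = {[]}" by auto
  then show ?case by simp
next
  case (Suc m)
  let ?L = "{xs. set xs \<subseteq> A \<and> length xs = m}"
  have inj: "inj_on (\<lambda>(xs, l). l # xs) (?L \<times> A)" by (auto simp: inj_on_def)
  have "(\<Sum>xs\<in>{xs. set xs \<subseteq> A \<and> length xs = Suc m}. prod_list (map x xs))
      = (\<Sum>(xs, l)\<in>?L \<times> A. prod_list (map x (l # xs)))"
    unfolding lists_length_Suc_eq by (subst sum.reindex[OF inj]) (simp add: case_prod_unfold)
  also have "\<dots> = (\<Sum>l\<in>A. x l) * (\<Sum>xs\<in>?L. prod_list (map x xs))"
    by (simp add: sum.cartesian_product[symmetric] sum_distrib_left sum_distrib_right sum.swap[of _ ?L A])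
  finally show ?case using Suc by simp
qed

lemma power_sum_eq_sum_multisets:
  fixes x :: "'i \<Rightarrow> 'a::comm_semiring_1"
  assumes fA: "finite A"
  shows "(\<Sum>l\<in>A. x l) ^ m = (\<Sum>M\<in>multisets_of_size A m.
      of_nat (card {xs. set xs \<subseteq> A \<and> length xs = m \<and> mset xs = M}) * prod_mset (image_mset x M))"
proof -
  let ?L = "{xs. set xs \<subseteq> A \<and> length xs = m}"
  have sub: "mset ` ?L \<subseteq> multisets_of_size A m" by (auto simp: multisets_of_size_def)
  have "(\<Sum>xs\<in>?L. prod_list (map x xs))
      = (\<Sum>M\<in>multisets_of_size A m. \<Sum>xs\<in>{xs\<in>?L. mset xs = M}. prod_list (map x xs))"
    by (rule sum.group[OF finite_lists_length_eq[OF fA] finite_multisets_of_size[OF fA] sub, symmetric])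
  also have "\<dots> = (\<Sum>M\<in>multisets_of_size A m. \<Sum>xs\<in>{xs\<in>?L. mset xs = M}. prod_mset (image_mset x M))"
    by (intro sum.cong refl) (auto simp flip: prod_mset_prod_list mset_map)
  finally show ?thesis by (simp add: power_sum_eq_sum_lists[OF fA])
qed

locale comm_cstar =
  fixes cj :: "'a::{comm_ring_1,real_normed_algebra_1,banach}" and st :: "'a \<Rightarrow> 'a"
  assumes cstar_comm: "cstar_comm cj st"
begin

lemma cj_mult_cj: "cj * cj = -1"
  and norm_csc: "norm (csc cj c x) = cmod c * norm x"
  and st_add: "st (x + y) = st x + st y"
  and st_csc: "st (csc cj c x) = csc cj (cnj c) (st x)"
  and st_mult: "st (x * y) = st y * st x"
  and st_st [simp]: "st (st x) = x"
  and norm_st_mult_self: "norm (st x * x) = (norm x)\<^sup>2"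
  using cstar_comm unfolding cstar_comm_def by blast+

definition of_cplx :: "complex \<Rightarrow> 'a" where
  "of_cplx c = of_real (Re c) + of_real (Im c) * cj"

lemma csc_eq_of_cplx_mult: "csc cj c x = of_cplx c * x"
  unfolding csc_def of_cplx_def ..

lemma norm_of_cplx [simp]: "norm (of_cplx c) = cmod c"
  using norm_csc[of c 1] by (simp add: csc_eq_of_cplx_mult)

lemma of_cplx_diff: "of_cplx (c - d) = of_cplx c - of_cplx d"
  unfolding of_cplx_def by (simp add: algebra_simps)

lemma of_cplx_mult: "of_cplx (c * d) = of_cplx c * of_cplx d"
proof -
  have "of_cplx c * of_cplx d = of_real (Re c * Re d) + of_real (Re c * Im d + Im c * Re d) * cj
     + of_real (Im c * Im d) * (cj * cj)"
    unfolding of_cplx_def by (simp add: algebra_simps)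
  then show ?thesis unfolding of_cplx_def cj_mult_cj by (simp add: algebra_simps)
qed

lemma of_cplx_of_real [simp]: "of_cplx (complex_of_real r) = of_real r"
  unfolding of_cplx_def by simp

lemma of_cplx_one [simp]: "of_cplx 1 = 1"
  using of_cplx_of_real[of 1] by simp

lemma of_cplx_ii [simp]: "of_cplx \<i> = cj"
  unfolding of_cplx_def by simp

lemma of_cplx_minus: "of_cplx (- c) = - of_cplx c"
  unfolding of_cplx_def by simp

lemma st_zero [simp]: "st 0 = 0"
  using st_add[of 0 0] by simp

lemma st_minus: "st (- x) = - st x"
  using st_add[of x "- x"] by (simp add: eq_neg_iff_add_eq_0 add.commute)

lemma st_diff: "st (x - y) = st x - st y"
  using st_add[of x "- y"] by (simp add: st_minus)

lemma st_one [simp]: "st 1 = 1"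
  using st_mult[of 1 "st 1"] by simp

lemma st_of_cplx: "st (of_cplx c) = of_cplx (cnj c)"
  using st_csc[of c 1] by (simp add: csc_eq_of_cplx_mult)

lemma st_of_real [simp]: "st (of_real r) = of_real r"
  using st_of_cplx[of "complex_of_real r"] by simp

lemma st_cj: "st cj = - cj"
  using st_of_cplx[of \<i>] by (simp add: of_cplx_minus)

lemma st_sum: "st (sum f A) = (\<Sum>i\<in>A. st (f i))"
  by (induction A rule: infinite_finite_induct) (auto simp: st_add)

lemma st_power: "st (x ^ n) = st x ^ n"
  by (induction n) (auto simp: st_mult mult.commute)

lemma st_scaleR: "st (r *\<^sub>R x) = r *\<^sub>R st x"
  by (simp add: scaleR_conv_of_real st_mult mult.commute)

lemma norm_st [simp]: "norm (st x) = norm x"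
proof -
  have "norm y \<le> norm (st y)" for y
  proof (cases "y = 0")
    case False
    have "(norm y)\<^sup>2 \<le> norm (st y) * norm y"
      using norm_st_mult_self[of y] norm_mult_ineq[of "st y" y] by simp
    then show ?thesis using False by (simp add: power2_eq_square)
  qed simp
  from this[of x] this[of "st x"] show ?thesis by simp
qed

lemma norm_mult_st_self: "norm (x * st x) = (norm x)\<^sup>2"
  using norm_st_mult_self[of x] by (simp add: mult.commute)

subsection \<open>Self-adjoint elements have real spectrum\<close>

lemma minus_of_cplx_dvd_one:
  assumes "norm x < cmod l"
  shows "(x - of_cplx l) dvd 1"
proof -
  have l: "l \<noteq> 0" using assms by auto
  have inv: "of_cplx l * of_cplx (1 / l) = 1"
    using of_cplx_mult[of l "1 / l"] l by simp
  have "norm (of_cplx (1 / l) * x) \<le> norm x / cmod l"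
    using norm_mult_ineq[of "of_cplx (1 / l)" x] by (simp add: norm_divide field_simps)
  also have "\<dots> < 1" using assms l by simp
  finally have "(1 - of_cplx (1 / l) * x) dvd 1" by (rule one_minus_dvd_one)
  moreover have "of_cplx l dvd 1" using inv by (metis dvdI)
  moreover have "x - of_cplx l = - (of_cplx l * (1 - of_cplx (1 / l) * x))"
    by (simp add: algebra_simps inv flip: mult.assoc)
  ultimately show ?thesis by (metis minus_dvd_iff mult_dvd_mono mult_1)
qed

text \<open>Arens' argument: if h - (a + ib) were singular with b \<noteq> 0, then for every real t,
  (b + t)^2 \<le> \<parallel>h - a + it\<parallel>^2 = \<parallel>(h - a)^2 + t^2\<parallel> \<le> \<parallel>h - a\<parallel>^2 + t^2, which fails for large t.\<close>

lemma selfadjoint_minus_of_cplx_dvd_one: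
  assumes h: "st h = h" and im: "Im c \<noteq> 0"
  shows "(h - of_cplx c) dvd 1"
proof (rule ccontr)
  assume singular: "\<not> (h - of_cplx c) dvd 1"
  define k where "k = h - of_real (Re c)"
  define b where "b = Im c"
  have sk: "st k = k" unfolding k_def by (simp add: st_diff h)
  have bound: "(b + t)\<^sup>2 \<le> (norm k)\<^sup>2 + t\<^sup>2" for t
  proof -
    define u where "u = of_real t * cj"
    have "h - of_cplx c = (k + u) - of_cplx (\<i> * complex_of_real (b + t))"
      unfolding k_def u_def b_def by (simp add: of_cplx_def algebra_simps)
    then have "\<not> norm (k + u) < cmod (\<i> * complex_of_real (b + t))"
      using singular minus_of_cplx_dvd_one by metis
    then have "\<bar>b + t\<bar> \<le> norm (k + u)" by (simp add: norm_mult flip: of_real_add)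
    then have "(b + t)\<^sup>2 \<le> (norm (k + u))\<^sup>2" by (metis abs_ge_zero power2_abs power_mono)
    also have "(norm (k + u))\<^sup>2 = norm (k * k + of_real (t\<^sup>2))"
    proof -
      have "st u = - u" unfolding u_def by (simp add: st_mult st_cj)
      moreover have "u * u = of_real (t\<^sup>2) * (cj * cj)"
        unfolding u_def by (simp add: power2_eq_square algebra_simps)
      ultimately have "st (k + u) * (k + u) = k * k + of_real (t\<^sup>2)"
        by (simp add: st_add sk cj_mult_cj algebra_simps)
      then show ?thesis by (simp flip: norm_st_mult_self)
    qed
    also have "\<dots> \<le> norm (k * k) + t\<^sup>2"
      using norm_triangle_ineq[of "k * k" "of_real (t\<^sup>2)"] by (simp del: of_real_power)
    also have "\<dots> \<le> (norm k)\<^sup>2 + t\<^sup>2"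
      using norm_mult_ineq[of k k] by (simp add: power2_eq_square)
    finally show ?thesis .
  qed
  have b: "b \<noteq> 0" using im b_def by simp
  have "(b + (norm k)\<^sup>2 / (2 * b))\<^sup>2 = b\<^sup>2 + (norm k)\<^sup>2 + ((norm k)\<^sup>2 / (2 * b))\<^sup>2"
    using b by (simp add: power2_eq_square field_simps)
  with bound[of "(norm k)\<^sup>2 / (2 * b)"] have "b\<^sup>2 \<le> 0" by linarith
  then show False using b by simp
qed

subsection \<open>A norm characterisation of positivity\<close>

definition norm_positive :: "'a \<Rightarrow> bool" where
  "norm_positive h \<longleftrightarrow> st h = h \<and> (\<exists>s\<ge>0. norm (of_real s - h) \<le> s)"

lemma norm_positive_imp_alg_pos:
  assumes "norm_positive h"
  shows "alg_pos cj st h"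
proof -
  obtain s where s: "s \<ge> 0" "norm (of_real s - h) \<le> s" and h: "st h = h"
    using assms unfolding norm_positive_def by blast
  have unit: "(h - of_cplx c) dvd 1" if "\<not> (Im c = 0 \<and> Re c \<ge> 0)" for c
  proof (cases "Im c = 0")
    case False
    then show ?thesis using selfadjoint_minus_of_cplx_dvd_one h by blast
  next
    case True
    then have "s < cmod (complex_of_real s - c)"
      using that s(1) abs_Re_le_cmod[of "complex_of_real s - c"] by simp
    then have "(of_real s - h - of_cplx (complex_of_real s - c)) dvd 1"
      using s(2) by (intro minus_of_cplx_dvd_one) simp
    moreover have "of_real s - h - of_cplx (complex_of_real s - c) = - (h - of_cplx c)"
      by (simp add: of_cplx_diff)
    ultimately show ?thesis by (metis minus_dvd_iff)
  qed
  have "c \<notin> alg_spectrum cj h" if c: "\<not> (Im c = 0 \<and> Re c \<ge> 0)" for c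
  proof -
    obtain y where "1 = (h - of_cplx c) * y" using unit[OF c] by (rule dvdE)
    then show ?thesis
      unfolding alg_spectrum_def csc_eq_of_cplx_mult by (auto simp: mult.commute)
  qed
  then show ?thesis unfolding alg_pos_def using h by blast
qed

lemma norm_positive_zero [simp]: "norm_positive 0"
  unfolding norm_positive_def by auto

lemma norm_positive_add:
  assumes "norm_positive x" "norm_positive y"
  shows "norm_positive (x + y)"
proof -
  obtain s t where "s \<ge> 0" "norm (of_real s - x) \<le> s" "t \<ge> 0" "norm (of_real t - y) \<le> t"
    using assms unfolding norm_positive_def by blast
  moreover have "norm (of_real (s + t) - (x + y)) \<le> norm (of_real s - x) + norm (of_real t - y)"
    using norm_triangle_ineq[of "of_real s - x" "of_real t - y"] by (simp add: algebra_simps)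
  ultimately show ?thesis
    using assms unfolding norm_positive_def
    by (intro conjI exI[of _ "s + t"]) (auto simp: st_add)
qed

lemma norm_positive_sum: "(\<And>i. i \<in> A \<Longrightarrow> norm_positive (f i)) \<Longrightarrow> norm_positive (sum f A)"
  by (induction A rule: infinite_finite_induct) (auto intro: norm_positive_add)

lemma norm_positive_scaleR:
  assumes "norm_positive x" "r \<ge> 0"
  shows "norm_positive (r *\<^sub>R x)"
proof -
  obtain s where s: "s \<ge> 0" "norm (of_real s - x) \<le> s" "st x = x"
    using assms unfolding norm_positive_def by blast
  have "of_real (r * s) - r *\<^sub>R x = r *\<^sub>R (of_real s - x)"
    by (simp add: scaleR_conv_of_real algebra_simps)
  then have "norm (of_real (r * s) - r *\<^sub>R x) = r * norm (of_real s - x)"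
    using assms(2) by simp
  also have "\<dots> \<le> r * s" using s assms(2) by (simp add: mult_left_mono)
  finally show ?thesis
    unfolding norm_positive_def using s assms(2)
    by (intro conjI exI[of _ "r * s"]) (auto simp: st_scaleR)
qed

lemma norm_positive_of_real_diff:
  assumes "st y = y" "norm y \<le> r"
  shows "norm_positive (of_real r - y)"
proof -
  have "0 \<le> r" using norm_ge_zero assms(2) by (rule order_trans)
  with assms show ?thesis
    unfolding norm_positive_def by (auto simp: st_diff intro!: exI[of _ r])
qed

lemma le_norm_if_norm_positive_diff:
  assumes "norm_positive (h - of_real c)"
  shows "c \<le> norm h"
proof -
  obtain s where s: "norm (of_real s - (h - of_real c)) \<le> s"
    using assms unfolding norm_positive_def by blast
  have "s + c \<le> norm (of_real (s + c) :: 'a)" unfolding norm_of_real by simp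
  also have "\<dots> \<le> norm (of_real s - (h - of_real c)) + norm h"
    using norm_triangle_ineq[of "of_real s - (h - of_real c)" h] by (simp add: algebra_simps)
  finally show ?thesis using s by linarith
qed

lemma alg_le_if_norm_positive_diff:
  assumes "norm_positive (y - x)" "st x = x"
  shows "alg_le cj st x y"
proof -
  have "st y - st x = y - x"
    using assms(1) unfolding norm_positive_def by (simp add: st_diff)
  with assms show ?thesis
    unfolding alg_le_def by (auto intro: norm_positive_imp_alg_pos)
qed

lemma alg_le_of_real_if_norm_positive_diff:
  assumes "norm_positive (of_real r - x)"
  shows "alg_le cj st x (of_real r)"
proof -
  have "st x = x"
    using assms unfolding norm_positive_def by (simp add: st_diff)
  with assms show ?thesis by (rule alg_le_if_norm_positive_diff)
qed

text \<open>The square root of 1 - x is 1 - y for the fixed point y of the contraction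
  y \<mapsto> (x + y^2)/2 on the ball of radius 1/4.\<close>

lemma selfadjoint_sqrt_one_minus:
  assumes sx: "st x = x" and nx: "norm x \<le> 1/4"
  obtains c where "st c = c" "c * c = 1 - x"
proof -
  define f where "f y = (1/2) *\<^sub>R (x + y * y)" for y
  define S where "S = cball (0::'a) (1/4)"
  have fS: "f ` S \<subseteq> S"
  proof
    fix z assume "z \<in> f ` S"
    then obtain y where y: "norm y \<le> 1/4" "z = f y" unfolding S_def by auto
    have "norm (y * y) \<le> 1/4 * (1/4)"
      using norm_mult_ineq[of y y] mult_mono[OF y(1) y(1)] by auto
    then have "norm (x + y * y) \<le> 1/2" using norm_triangle_ineq[of x "y * y"] nx by linarith
    then have "norm (f y) \<le> 1/4" unfolding f_def by simp
    then show "z \<in> S" using y unfolding S_def by simp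
  qed
  have contraction: "dist (f y) (f z) \<le> 1/4 * dist y z" if "y \<in> S" "z \<in> S" for y z
  proof -
    have "norm (y + z) \<le> 1/2"
      using that norm_triangle_ineq[of y z] unfolding S_def by simp
    then have "norm (y + z) * norm (y - z) \<le> 1/2 * norm (y - z)"
      by (rule mult_right_mono) simp
    moreover have "f y - f z = (1/2) *\<^sub>R ((y + z) * (y - z))"
      unfolding f_def by (simp add: algebra_simps flip: scaleR_diff_right)
    ultimately show ?thesis
      using norm_mult_ineq[of "y + z" "y - z"] by (simp add: dist_norm)
  qed
  have "\<exists>!y\<in>S. f y = y"
    by (rule Banach_fix[OF _ _ _ _ fS contraction]) (auto simp: S_def complete_eq_closed)
  then obtain y where y: "y \<in> S" "f y = y" and unique: "\<And>z. z \<in> S \<Longrightarrow> f z = z \<Longrightarrow> z = y"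
    by blast
  have "f (st y) = st (f y)"
    unfolding f_def by (simp add: st_scaleR st_add st_mult sx)
  then have sy: "st y = y"
    using y unique[of "st y"] unfolding S_def by simp
  have "x + y * y = 2 *\<^sub>R f y" unfolding f_def by simp
  then have "x + y * y = 2 *\<^sub>R y" using y(2) by simp
  then have "(1 - y) * (1 - y) = 1 - x" by (simp add: algebra_simps scaleR_2)
  moreover have "st (1 - y) = 1 - y" by (simp add: st_diff sy)
  ultimately show ?thesis using that by blast
qed

text \<open>With c the square root of 1 - b^2, u = b + ic satisfies u*u = 1, so \<parallel>u\<parallel> = 1 and
  \<parallel>c\<parallel> = \<parallel>u - u*\<parallel>/2 \<le> 1.\<close>

lemma norm_one_minus_square_le:
  assumes sb: "st b = b" and nb: "norm b \<le> 1/2"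
  shows "norm (1 - b * b) \<le> 1"
proof -
  have "norm (b * b) \<le> 1/4"
    using norm_mult_ineq[of b b] mult_mono[OF nb nb] by simp
  moreover have "st (b * b) = b * b" by (simp add: st_mult sb)
  ultimately obtain c where sc: "st c = c" and cc: "c * c = 1 - b * b"
    using selfadjoint_sqrt_one_minus by blast
  define u where "u = b + cj * c"
  have su: "st u = b - cj * c" unfolding u_def by (simp add: st_add st_mult sb sc st_cj)
  have "st u * u = (b - cj * c) * u" unfolding su ..
  also have "\<dots> = b * b - (cj * cj) * (c * c)" unfolding u_def by (simp add: algebra_simps)
  finally have "st u * u = 1" by (simp add: cj_mult_cj cc)
  then have "norm u = 1 \<or> norm u = -1" using norm_st_mult_self[of u] by (simp add: power2_eq_1_iff)
  with norm_ge_zero[of u] have "norm u = 1" by linarith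
  have "norm (cj * c) = norm c"
    using norm_csc[of \<i> c] by (simp add: csc_eq_of_cplx_mult)
  moreover have "u - st u = 2 *\<^sub>R (cj * c)" unfolding su by (simp add: u_def scaleR_2)
  ultimately have "2 * norm c = norm (u - st u)" by simp
  also have "\<dots> \<le> 2"
    using norm_triangle_ineq4[of u "st u"] \<open>norm u = 1\<close> by simp
  finally have "norm c \<le> 1" by simp
  then show ?thesis
    using norm_mult_ineq[of c c] mult_mono[of "norm c" 1 "norm c" 1] cc by simp
qed

lemma norm_positive_square:
  assumes sa: "st a = a"
  shows "norm_positive (a * a)"
proof (cases "a = 0")
  case False
  define r where "r = 2 * norm a"
  have r: "r > 0" using False r_def by simp
  define b where "b = (1 / r) *\<^sub>R a"
  have "norm b = 1/2" unfolding b_def r_def using False by simp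
  moreover have "st b = b" unfolding b_def by (simp add: st_scaleR sa)
  ultimately have "norm (1 - b * b) \<le> 1" by (intro norm_one_minus_square_le) simp_all
  moreover have "a * a - of_real (r\<^sup>2) = r\<^sup>2 *\<^sub>R (b * b - 1)"
  proof -
    have "r\<^sup>2 *\<^sub>R (b * b) = a * a" using r unfolding b_def by (simp add: power2_eq_square)
    then show ?thesis by (simp add: scaleR_diff_right of_real_def)
  qed
  ultimately have "norm (a * a - of_real (r\<^sup>2)) \<le> r\<^sup>2"
    by (simp add: norm_minus_commute mult_left_le)
  then have "norm_positive (of_real (r\<^sup>2) - (of_real (r\<^sup>2) - a * a))"
    by (intro norm_positive_of_real_diff) (simp_all add: st_diff st_mult st_power sa norm_minus_commute)
  then show ?thesis by simp
qed simp

text \<open>In the commutative case y y* = ((y + y*)^2 + (i(y* - y))^2)/4, a sum of squares of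
  self-adjoint elements.\<close>

lemma norm_positive_mult_st: "norm_positive (y * st y)"
proof -
  define p where "p = y + st y"
  define q where "q = cj * (st y - y)"
  have sp: "st p = p" unfolding p_def by (simp add: st_add add.commute)
  have sq: "st q = q" unfolding q_def by (simp add: st_mult st_diff st_cj algebra_simps)
  have "q * q = (cj * cj) * ((st y - y) * (st y - y))" unfolding q_def by (simp add: algebra_simps)
  then have "p * p + q * q = 4 * (y * st y)" unfolding p_def by (simp add: cj_mult_cj algebra_simps)
  then have "p * p + q * q = 4 *\<^sub>R (y * st y)" by (simp add: scaleR_conv_of_real)
  then have "y * st y = (1/4) *\<^sub>R (p * p + q * q)" by simp
  then show ?thesis
    using norm_positive_scaleR norm_positive_add norm_positive_square sp sq by simp
qed

lemma norm_power_mult_st_power: "norm (x ^ m * st x ^ m) \<le> norm x ^ (2 * m)"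
proof -
  have "norm (x ^ m * st x ^ m) = (norm (x ^ m))\<^sup>2"
    using norm_mult_st_self[of "x ^ m"] by (simp add: st_power)
  also have "\<dots> \<le> (norm x ^ m)\<^sup>2"
    by (intro power_mono norm_power_ineq) simp
  finally show ?thesis by (simp add: power_mult mult.commute)
qed

lemma st_prod_mset: "st (prod_mset (image_mset f M)) = prod_mset (image_mset (\<lambda>l. st (f l)) M)"
  by (induction M) (auto simp: st_mult mult.commute)

subsection \<open>Gram matrices and the frame potential\<close>

definition gram :: "('j \<Rightarrow> 'i \<Rightarrow> 'a) \<Rightarrow> 'i set \<Rightarrow> 'j \<Rightarrow> 'j \<Rightarrow> 'a" where
  "gram b I j k = (\<Sum>i\<in>I. b j i * st (b k i))"

definition frame_potential :: "('j \<Rightarrow> 'i \<Rightarrow> 'a) \<Rightarrow> 'i set \<Rightarrow> 'j set \<Rightarrow> nat \<Rightarrow> 'a" where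
  "frame_potential b I J m = (\<Sum>j\<in>J. \<Sum>k\<in>J. gram b I j k ^ m * gram b I k j ^ m)"

lemma st_gram: "st (gram b I j k) = gram b I k j"
  unfolding gram_def by (simp add: st_sum st_mult mult.commute)

lemma frame_potential_transpose:
  "frame_potential b I J 1 = frame_potential (\<lambda>i j. b j i) J I 1"
  unfolding frame_potential_def gram_def
  by (simp add: sum_product sum.swap[of _ J I] ac_simps)

lemma frame_potential_ge_diagonal:
  assumes "finite J"
  shows "norm_positive (frame_potential b I J 1 - (\<Sum>j\<in>J. (gram b I j j)\<^sup>2))"
proof -
  have "(\<Sum>k\<in>J. gram b I j k * gram b I k j)
      = (gram b I j j)\<^sup>2 + (\<Sum>k\<in>J - {j}. gram b I j k * st (gram b I j k))" if "j \<in> J" for j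
    using sum.remove[OF assms that] by (simp add: st_gram power2_eq_square)
  then have "frame_potential b I J 1 - (\<Sum>j\<in>J. (gram b I j j)\<^sup>2)
      = (\<Sum>j\<in>J. \<Sum>k\<in>J - {j}. gram b I j k * st (gram b I j k))"
    unfolding frame_potential_def by (simp add: sum.distrib flip: sum_subtractf)
  then show ?thesis by (simp add: norm_positive_sum norm_positive_mult_st)
qed

lemma norm_positive_sum_squares_minus_square_sum:
  assumes fin: "finite I" and sa: "\<And>i. i \<in> I \<Longrightarrow> st (p i) = p i"
  shows "norm_positive ((\<Sum>i\<in>I. (p i)\<^sup>2) - (1 / card I) *\<^sub>R (\<Sum>i\<in>I. p i)\<^sup>2)"
    (is "norm_positive (?A - (1 / card I) *\<^sub>R ?B)")
proof (cases "I = {}")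
  case False
  define c where "c = real (2 * card I)"
  have c: "c > 0" using False fin unfolding c_def by (simp add: card_gt_0_iff)
  have "c *\<^sub>R (?A - (1 / card I) *\<^sub>R ?B) = c *\<^sub>R ?A - (c / card I) *\<^sub>R ?B"
    by (simp add: scaleR_right_diff_distrib)
  also have "c / card I = 2" using c unfolding c_def by simp
  also have "c *\<^sub>R ?A - 2 *\<^sub>R ?B = (\<Sum>i\<in>I. \<Sum>l\<in>I. (p i - p l)\<^sup>2)"
    unfolding c_def sum_sum_power2_diff[OF fin] by (simp add: scaleR_conv_of_real)
  finally have eq: "c *\<^sub>R (?A - (1 / card I) *\<^sub>R ?B) = (\<Sum>i\<in>I. \<Sum>l\<in>I. (p i - p l)\<^sup>2)" .
  have "?A - (1 / card I) *\<^sub>R ?B = (1 / c) *\<^sub>R (\<Sum>i\<in>I. \<Sum>l\<in>I. (p i - p l)\<^sup>2)"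
    using c by (simp flip: eq)
  moreover have "norm_positive ((p i - p l)\<^sup>2)" if "i \<in> I" "l \<in> I" for i l
    using that sa by (simp add: power2_eq_square st_diff norm_positive_square)
  ultimately show ?thesis using c by (simp add: norm_positive_scaleR norm_positive_sum)
qed simp

lemma frame_potential_ge_square_trace:
  assumes "finite I" "finite J"
  shows "norm_positive (frame_potential b I J 1 - (1 / card I) *\<^sub>R (\<Sum>j\<in>J. gram b I j j)\<^sup>2)"
proof -
  define p where "p i = gram (\<lambda>i j. b j i) J i i" for i
  have diagonal: "(\<Sum>j\<in>J. gram b I j j) = (\<Sum>i\<in>I. p i)"
    unfolding p_def gram_def by (rule sum.swap)
  have "norm_positive (frame_potential (\<lambda>i j. b j i) J I 1 - (\<Sum>i\<in>I. (p i)\<^sup>2))"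
    unfolding p_def using assms(1) by (rule frame_potential_ge_diagonal)
  moreover have "norm_positive ((\<Sum>i\<in>I. (p i)\<^sup>2) - (1 / card I) *\<^sub>R (\<Sum>i\<in>I. p i)\<^sup>2)"
    using assms(1) by (rule norm_positive_sum_squares_minus_square_sum) (simp add: p_def st_gram)
  ultimately have "norm_positive ((frame_potential (\<lambda>i j. b j i) J I 1 - (\<Sum>i\<in>I. (p i)\<^sup>2))
      + ((\<Sum>i\<in>I. (p i)\<^sup>2) - (1 / card I) *\<^sub>R (\<Sum>i\<in>I. p i)\<^sup>2))"
    by (rule norm_positive_add)
  then show ?thesis
    unfolding frame_potential_transpose[of b I J] diagonal by (simp only: add_diff_eq diff_add_cancel)
qed

lemma gram_power_eq_gram:
  assumes "finite I"
  obtains c where "\<And>j k. gram b I j k ^ m = gram c (multisets_of_size I m) j k"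
proof -
  define w where "w M = card {xs. set xs \<subseteq> I \<and> length xs = m \<and> mset xs = M}" for M
  define P where "P j M = prod_mset (image_mset (b j) M)" for j M
  define c where "c j M = sqrt (w M) *\<^sub>R P j M" for j M
  have "gram b I j k ^ m = gram c (multisets_of_size I m) j k" for j k
  proof -
    have "gram b I j k ^ m
        = (\<Sum>M\<in>multisets_of_size I m. of_nat (w M) * prod_mset (image_mset (\<lambda>l. b j l * st (b k l)) M))"
      unfolding gram_def w_def by (rule power_sum_eq_sum_multisets[OF assms])
    also have "\<dots> = (\<Sum>M\<in>multisets_of_size I m. of_nat (w M) * (P j M * st (P k M)))"
      unfolding P_def st_prod_mset by (simp add: prod_mset.distrib)
    also have "\<dots> = gram c (multisets_of_size I m) j k"
    proof -
      have "c j M * st (c k M) = (sqrt (w M) * sqrt (w M)) *\<^sub>R (P j M * st (P k M))" for M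
        unfolding c_def by (simp add: st_scaleR)
      then show ?thesis unfolding gram_def by (simp add: scaleR_conv_of_real)
    qed
    finally show ?thesis .
  qed
  then show ?thesis by (rule that)
qed

lemma frame_potential_lower_bound:
  assumes "finite I" "finite J" and unit: "\<And>j. j \<in> J \<Longrightarrow> gram b I j j = 1"
  shows "norm_positive (frame_potential b I J m
           - of_real (real (card J) ^ 2 / real ((card I + m - 1) choose m)))"
proof -
  let ?K = "multisets_of_size I m"
  obtain c where c: "\<And>j k. gram b I j k ^ m = gram c ?K j k"
    using gram_power_eq_gram[OF assms(1), where b = b and m = m] by blast
  have "norm_positive (frame_potential c ?K J 1 - (1 / card ?K) *\<^sub>R (\<Sum>j\<in>J. gram c ?K j j)\<^sup>2)"
    using finite_multisets_of_size[OF assms(1)] assms(2) by (rule frame_potential_ge_square_trace)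
  moreover have "frame_potential b I J m = frame_potential c ?K J 1"
    unfolding frame_potential_def c by simp
  moreover have "(\<Sum>j\<in>J. gram c ?K j j) = of_nat (card J)"
    using unit by (simp flip: c)
  moreover have "(1 / card ?K) *\<^sub>R (of_nat (card J) :: 'a)\<^sup>2
      = of_real (real (card J) ^ 2 / real ((card I + m - 1) choose m))"
  proof -
    have "(1 / card ?K) *\<^sub>R (of_nat (card J) :: 'a)\<^sup>2
        = of_real (1 / card ?K) * (of_real (real (card J) ^ 2) :: 'a)"
      by (simp add: scaleR_conv_of_real)
    also have "\<dots> = of_real (real (card J) ^ 2 / real ((card I + m - 1) choose m))"
      by (simp only: card_multisets_of_size[OF assms(1)] of_real_mult[symmetric]) simp
    finally show ?thesis .
  qed
  ultimately show ?thesis by simp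
qed

lemma norm_gram_power_mult_le:
  "norm (gram b I j k ^ m * gram b I k j ^ m) \<le> norm (gram b I j k) ^ (2 * m)"
  using norm_power_mult_st_power[of "gram b I j k" m] by (simp add: st_gram)

lemma frame_potential_upper_bound:
  "norm_positive (of_real (\<Sum>j\<in>J. \<Sum>k\<in>J. norm (gram b I j k) ^ (2 * m)) - frame_potential b I J m)"
proof -
  have "st (gram b I j k ^ m * gram b I k j ^ m) = gram b I j k ^ m * gram b I k j ^ m" for j k
    by (simp add: st_mult st_power st_gram mult.commute)
  then have "norm_positive (of_real (norm (gram b I j k) ^ (2 * m)) - gram b I j k ^ m * gram b I k j ^ m)"
    for j k
    using norm_gram_power_mult_le by (rule norm_positive_of_real_diff)
  then show ?thesis
    unfolding frame_potential_def of_real_sum sum_subtractf[symmetric] by (blast intro: norm_positive_sum)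
qed

lemma max_offdiagonal_ge:
  fixes Y :: "'j \<Rightarrow> 'j \<Rightarrow> 'a" and f :: "'j \<Rightarrow> 'j \<Rightarrow> real"
  assumes J: "finite J" "card J \<ge> 2"
    and diag: "\<And>j. j \<in> J \<Longrightarrow> Y j j = 1"
    and offdiag: "\<And>j k. j \<in> J \<Longrightarrow> k \<in> J \<Longrightarrow> j \<noteq> k \<Longrightarrow> norm (Y j k) \<le> f j k"
    and pos: "norm_positive ((\<Sum>j\<in>J. \<Sum>k\<in>J. Y j k) - of_real c)"
  shows "1 / (real (card J) - 1) * (c / card J - 1)
           \<le> Max {f j k | j k. j \<in> J \<and> k \<in> J \<and> j \<noteq> k}"
proof -
  define M where "M = Max {f j k | j k. j \<in> J \<and> k \<in> J \<and> j \<noteq> k}"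
  have "{f j k | j k. j \<in> J \<and> k \<in> J \<and> j \<noteq> k} \<subseteq> (\<lambda>(j, k). f j k) ` (J \<times> J)" by auto
  then have "finite {f j k | j k. j \<in> J \<and> k \<in> J \<and> j \<noteq> k}"
    by (rule finite_subset) (simp add: J(1))
  then have le_M: "f j k \<le> M" if "j \<in> J" "k \<in> J" "j \<noteq> k" for j k
    unfolding M_def using that by (intro Max_ge) auto
  define Z where "Z = (\<Sum>j\<in>J. \<Sum>k\<in>J - {j}. Y j k)"
  have "(\<Sum>j\<in>J. \<Sum>k\<in>J. Y j k) = of_nat (card J) + Z"
    unfolding Z_def using J(1) by (simp add: sum.remove[OF J(1)] diag sum.distrib)
  then have "c - card J \<le> norm Z"
    using pos by (intro le_norm_if_norm_positive_diff) (simp add: algebra_simps)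
  also have "norm Z \<le> (\<Sum>j\<in>J. \<Sum>k\<in>J - {j}. M)"
  proof -
    have "norm (Y j k) \<le> M" if "j \<in> J" "k \<in> J - {j}" for j k
      using that offdiag[of j k] le_M[of j k] by auto
    then show ?thesis
      unfolding Z_def by (intro order_trans[OF norm_sum] sum_mono order_trans[OF norm_sum]) auto
  qed
  also have "\<dots> = card J * ((card J - 1) * M)"
    using J(1) by simp
  finally have "c / card J - 1 \<le> (real (card J) - 1) * M"
    using J(2) by (simp add: field_simps)
  then show ?thesis
    unfolding M_def[symmetric] using J(2) by (simp add: field_simps)
qed


lemma welch_bound_max_offdiagonal:
  assumes "finite I" "finite J" "card J \<ge> 2" and unit: "\<And>j. j \<in> J \<Longrightarrow> gram b I j j = 1"
  shows "1 / (real (card J) - 1) * (real (card J) / real ((card I + m - 1) choose m) - 1)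
           \<le> Max {norm (gram b I j k) ^ (2 * m) | j k. j \<in> J \<and> k \<in> J \<and> j \<noteq> k}"
proof -
  have "1 / (real (card J) - 1)
        * (real (card J) ^ 2 / real ((card I + m - 1) choose m) / real (card J) - 1)
      \<le> Max {norm (gram b I j k) ^ (2 * m) | j k. j \<in> J \<and> k \<in> J \<and> j \<noteq> k}"
    using frame_potential_lower_bound[OF assms(1,2) unit, of m] unfolding frame_potential_def
    by (rule max_offdiagonal_ge[rotated 4]) (simp_all add: assms norm_gram_power_mult_le)
  then show ?thesis using assms(3) by (simp add: power2_eq_square)
qed

lemma welch_bound_max_offdiagonal_1:
  assumes "finite I" "finite J" "card J \<ge> 2" and unit: "\<And>j. j \<in> J \<Longrightarrow> gram b I j j = 1"
  shows "(real (card J) - real (card I)) / (real (card I) * (real (card J) - 1))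
           \<le> Max {norm (gram b I j k) ^ 2 | j k. j \<in> J \<and> k \<in> J \<and> j \<noteq> k}"
proof -
  obtain j where "j \<in> J" using assms(3) by fastforce
  then have "I \<noteq> {}" using unit[of j] by (auto simp: gram_def)
  then have "card I \<noteq> 0" using assms(1) by simp
  then have "(real (card J) - real (card I)) / (real (card I) * (real (card J) - 1))
      = 1 / (real (card J) - 1) * (real (card J) / real (card I) - 1)"
    using assms(3) by (simp add: field_simps)
  with welch_bound_max_offdiagonal[OF assms, of 1] show ?thesis by simp
qed
end

lemma hilbert_module_rank_gram:
  fixes ip :: "'e::ab_group_add \<Rightarrow> 'e \<Rightarrow> 'a::{comm_ring_1,real_normed_algebra_1,banach}"
  assumes "hilbert_module cj st act ip" "has_rank act ip d"
  obtains a where "\<And>x y. ip x y = (\<Sum>l\<in>{1..d}. a x l * st (a y l))"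
proof -
  have ip_add: "\<forall>x y z. ip (x + y) z = ip x z + ip y z"
    using assms(1) unfolding hilbert_module_def by (elim conjE) assumption
  have ip_act: "\<forall>c x z. ip (act c x) z = c * ip x z"
    using assms(1) unfolding hilbert_module_def by (elim conjE) assumption
  have ip_swap: "\<forall>x z. ip z x = st (ip x z)"
    using assms(1) unfolding hilbert_module_def by (elim conjE) assumption
  have ip_zero: "ip 0 z = 0" for z
    using ip_add[rule_format, of 0 0 z] by simp
  have ip_sum: "ip (sum g A) z = (\<Sum>l\<in>A. ip (g l) z)" for g :: "nat \<Rightarrow> 'e" and A z
    by (induction A rule: infinite_finite_induct) (simp_all add: ip_zero ip_add)
  obtain \<omega> :: "nat \<Rightarrow> 'e" where expand: "\<And>x. x = (\<Sum>l=1..d. act (ip x (\<omega> l)) (\<omega> l))"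
    using assms(2) unfolding has_rank_def by blast
  have "ip x y = (\<Sum>l\<in>{1..d}. ip x (\<omega> l) * st (ip y (\<omega> l)))" for x y
  proof -
    have "ip x y = ip (\<Sum>l=1..d. act (ip x (\<omega> l)) (\<omega> l)) y"
      by (rule arg_cong[where f = "\<lambda>v. ip v y", OF expand])
    also have "\<dots> = (\<Sum>l\<in>{1..d}. ip x (\<omega> l) * ip (\<omega> l) y)"
      by (simp add: ip_sum ip_act)
    also have "\<dots> = (\<Sum>l\<in>{1..d}. ip x (\<omega> l) * st (ip y (\<omega> l)))"
    proof -
      have "ip (\<omega> l) y = st (ip y (\<omega> l))" for l using ip_swap by blast
      then show ?thesis by simp
    qed
    finally show ?thesis .
  qed
  then show ?thesis by (rule that)
qed

theorem theorem2p13: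
  fixes cj :: "'a::{comm_ring_1,real_normed_algebra_1,banach}" and st :: "'a \<Rightarrow> 'a"
    and act :: "'a \<Rightarrow> 'e::ab_group_add \<Rightarrow> 'e" and ip :: "'e \<Rightarrow> 'e \<Rightarrow> 'a"
    and \<tau> :: "nat \<Rightarrow> 'e" and n d :: nat
  assumes alg: "(W_star cj st \<and> sigma_finite_alg st) \<or> AW_star cj st"
    and hm: "hilbert_module cj st act ip"
    and rk: "has_rank act ip d"
    and nd: "n \<ge> d"
    and unit: "\<forall>j\<in>{1..n}. ip (\<tau> j) (\<tau> j) = 1"
  shows "(\<forall>m::nat. m \<ge> 1 \<longrightarrow>
            alg_le cj st (\<Sum>j=1..n. \<Sum>k=1..n. ip (\<tau> j) (\<tau> k) ^ m * ip (\<tau> k) (\<tau> j) ^ m)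
                         (of_real (\<Sum>j=1..n. \<Sum>k=1..n. norm (ip (\<tau> j) (\<tau> k)) ^ (2 * m))) \<and>
            alg_le cj st (of_real (real n ^ 2 / real ((d + m - 1) choose m)))
                         (\<Sum>j=1..n. \<Sum>k=1..n. ip (\<tau> j) (\<tau> k) ^ m * ip (\<tau> k) (\<tau> j) ^ m))
       \<and> alg_le cj st (\<Sum>j=1..n. \<Sum>k=1..n. ip (\<tau> j) (\<tau> k) * ip (\<tau> k) (\<tau> j))
                      (of_real (\<Sum>j=1..n. \<Sum>k=1..n. norm (ip (\<tau> j) (\<tau> k)) ^ 2))
       \<and> alg_le cj st (of_real (real n ^ 2 / real d))
                      (\<Sum>j=1..n. \<Sum>k=1..n. ip (\<tau> j) (\<tau> k) * ip (\<tau> k) (\<tau> j))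
       \<and> (n \<ge> 2 \<longrightarrow>
            (\<forall>m::nat. m \<ge> 1 \<longrightarrow>
               Max {norm (ip (\<tau> j) (\<tau> k)) ^ (2 * m) | j k. j \<in> {1..n} \<and> k \<in> {1..n} \<and> j \<noteq> k}
                 \<ge> 1 / (real n - 1) * (real n / real ((d + m - 1) choose m) - 1))
          \<and> Max {norm (ip (\<tau> j) (\<tau> k)) ^ 2 | j k. j \<in> {1..n} \<and> k \<in> {1..n} \<and> j \<noteq> k}
              \<ge> (real n - real d) / (real d * (real n - 1)))"
proof -
  have "cstar_comm cj st" using alg unfolding W_star_def AW_star_def by blast
  then interpret comm_cstar cj st by (rule comm_cstar.intro)
  obtain a where a: "\<And>x y. ip x y = (\<Sum>l\<in>{1..d}. a x l * st (a y l))"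
    using hilbert_module_rank_gram[OF hm rk] by blast
  define b where "b j = a (\<tau> j)" for j
  define I where "I = {1..d}"
  have I: "finite I" "card I = d" and J: "finite {1..n}" "card {1..n} = n"
    unfolding I_def by simp_all
  have ip_gram: "ip (\<tau> j) (\<tau> k) = gram b I j k" for j k
    unfolding gram_def b_def I_def by (rule a)
  have diag: "gram b I j j = 1" if "j \<in> {1..n}" for j
    using unit that unfolding ip_gram by blast
  note lower = frame_potential_lower_bound[OF I(1) J(1) diag]
  note upper = frame_potential_upper_bound[where b = b and I = I and J = "{1..n}"]
  show ?thesis
    unfolding ip_gram
    using alg_le_if_norm_positive_diff[OF lower st_of_real] alg_le_of_real_if_norm_positive_diff[OF upper]
      alg_le_if_norm_positive_diff[OF lower[where m = 1] st_of_real]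
      alg_le_of_real_if_norm_positive_diff[OF upper[where m = 1]]
      welch_bound_max_offdiagonal[OF I(1) J(1) _ diag] welch_bound_max_offdiagonal_1[OF I(1) J(1) _ diag]
    by (simp add: I J frame_potential_def)
qed

end
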